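(* For the problem $P2\|C_{\max}$ with $n$ jobs, starting from any schedule, the total number of improving iterations (each replacing the current schedule by an improving 2-swap neighbor) before a 2-swap optimal solution is reached is $O(n^4)$.
   Context: Problem $P2\|C_{\max}$: $n$ jobs with processing times $p_j>0$, two identical machines. A schedule $\sigma=(M_1,M_2)$ partitions the jobs into the sets processed on machines 1 and 2; loads $L_i=\sum_{j\in M_i}p_j$, makespan $\max_iL_i$. A 2-swap neighbor is obtained by choosing $k'$ jobs on one machine and $k''$ jobs on the other with $k'+k''\le 2$ and interchanging their machine assignments (so it covers moving one job, moving two jobs, or exchanging two jobs on different machines). It is improving if its makespan is strictly smaller than the current makespan. A schedule is 2-swap optimal if it has no improving 2-swap neighbor. *)

theory Defs
  imports Main "HOL.Real"
begin

text \<open>Jobs are 0..n-1 with processing times p j. A schedule is represented by the set M1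
  of jobs on machine 1; machine 2 gets the remaining jobs {..<n} - M1.\<close>

definition machine2 :: "nat \<Rightarrow> nat set \<Rightarrow> nat set" where
  "machine2 n M1 = {..<n} - M1"

definition makespan :: "(nat \<Rightarrow> real) \<Rightarrow> nat \<Rightarrow> nat set \<Rightarrow> real" where
  "makespan p n M1 = max (\<Sum>j\<in>M1. p j) (\<Sum>j\<in>machine2 n M1. p j)"

definition swap2_neighbor :: "nat \<Rightarrow> nat set \<Rightarrow> nat set \<Rightarrow> bool" where
  "swap2_neighbor n M1 M1' \<longleftrightarrow>
     (\<exists>A B. A \<subseteq> M1 \<and> B \<subseteq> machine2 n M1 \<and> card A + card B \<le> 2 \<and> M1' = (M1 - A) \<union> B)"

definition improving_swap2 :: "(nat \<Rightarrow> real) \<Rightarrow> nat \<Rightarrow> nat set \<Rightarrow> nat set \<Rightarrow> bool" where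
  "improving_swap2 p n M1 M1' \<longleftrightarrow>
     swap2_neighbor n M1 M1' \<and> makespan p n M1' < makespan p n M1"

end

theory Submission
  imports Defs
begin

text \<open>Let D be the load difference between the heavier machine X and the lighter one. An
  improving 2-swap moves A off X and B onto X with t = p(A) - p(B) satisfying 0 < t < D,
  and t is one of the O(n^2) values p a, p a + p b, p a - p b. If X stays heavier, the
  difference drops to D - 2t while the rank sum of X (rank = number of jobs at most as long)
  strictly decreases. Otherwise the new difference 2t - D is below t, so the value t drops out
  of the candidates lying strictly between 0 and the difference. Weighting the number of such
  candidates by n^2 + 1 and adding the rank sum of the heavier machine gives a potential
  bounded by 7 n^4 that decreases with every improving step.\<close>

definition transfer_amounts :: "(nat \<Rightarrow> real) \<Rightarrow> nat \<Rightarrow> real set" where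
  "transfer_amounts p n =
     p ` {..<n} \<union> (\<lambda>(a, b). p a + p b) ` ({..<n} \<times> {..<n})
       \<union> (\<lambda>(a, b). p a - p b) ` ({..<n} \<times> {..<n})"

definition amounts_below :: "(nat \<Rightarrow> real) \<Rightarrow> nat \<Rightarrow> real \<Rightarrow> nat" where
  "amounts_below p n D = card {t \<in> transfer_amounts p n. 0 < t \<and> t < D}"

definition rank :: "(nat \<Rightarrow> real) \<Rightarrow> nat \<Rightarrow> nat \<Rightarrow> nat" where
  "rank p n j = card {i \<in> {..<n}. p i \<le> p j}"

definition heavy_rank :: "(nat \<Rightarrow> real) \<Rightarrow> nat \<Rightarrow> nat set \<Rightarrow> nat set \<Rightarrow> nat" where
  "heavy_rank p n X Y =
     (if sum p Y < sum p X then sum (rank p n) X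
      else if sum p X < sum p Y then sum (rank p n) Y else 0)"

definition potential :: "(nat \<Rightarrow> real) \<Rightarrow> nat \<Rightarrow> nat set \<Rightarrow> nat set \<Rightarrow> nat" where
  "potential p n X Y = amounts_below p n \<bar>sum p X - sum p Y\<bar> * (n\<^sup>2 + 1) + heavy_rank p n X Y"

lemma finite_transfer_amounts: "finite (transfer_amounts p n)"
  unfolding transfer_amounts_def by simp

lemma card_transfer_amounts_le: "card (transfer_amounts p n) \<le> 2 * n\<^sup>2 + n"
proof -
  let ?S = "(\<lambda>(a, b). p a + p b) ` ({..<n} \<times> {..<n})"
  let ?D = "(\<lambda>(a, b). p a - p b) ` ({..<n} \<times> {..<n})"
  have "card (transfer_amounts p n) \<le> card (p ` {..<n} \<union> ?S) + card ?D"
    unfolding transfer_amounts_def by (rule card_Un_le)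
  also have "\<dots> \<le> card (p ` {..<n}) + card ?S + card ?D"
    using card_Un_le by (rule add_right_mono)
  finally have "card (transfer_amounts p n) \<le> card (p ` {..<n}) + card ?S + card ?D" .
  moreover have "card (p ` {..<n}) \<le> n"
    using card_image_le[of "{..<n}" p] by simp
  moreover have "card ?S \<le> n\<^sup>2" "card ?D \<le> n\<^sup>2"
    using card_image_le[of "{..<n} \<times> {..<n}"] by (simp_all add: card_cartesian_product power2_eq_square)
  ultimately show ?thesis by linarith
qed

lemma amounts_below_le: "amounts_below p n D \<le> 2 * n\<^sup>2 + n"
proof -
  have "{t \<in> transfer_amounts p n. 0 < t \<and> t < D} \<subseteq> transfer_amounts p n" by blast
  then show ?thesis
    unfolding amounts_below_def
    using card_mono[OF finite_transfer_amounts] card_transfer_amounts_le order_trans by blast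
qed

lemma amounts_below_mono: "d \<le> D \<Longrightarrow> amounts_below p n d \<le> amounts_below p n D"
  unfolding amounts_below_def by (intro card_mono finite_Collect_conjI) (auto simp: finite_transfer_amounts)

lemma amounts_below_strict_mono:
  assumes "t \<in> transfer_amounts p n" "0 < t" "d < t" "t < D"
  shows "amounts_below p n d < amounts_below p n D"
proof -
  have "{s \<in> transfer_amounts p n. 0 < s \<and> s < d} \<subseteq> {s \<in> transfer_amounts p n. 0 < s \<and> s < D}"
    using assms by auto
  moreover have "t \<in> {s \<in> transfer_amounts p n. 0 < s \<and> s < D} - {s \<in> transfer_amounts p n. 0 < s \<and> s < d}"
    using assms by simp
  ultimately have "{s \<in> transfer_amounts p n. 0 < s \<and> s < d} \<subset> {s \<in> transfer_amounts p n. 0 < s \<and> s < D}"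
    by blast
  then show ?thesis
    unfolding amounts_below_def by (intro psubset_card_mono) (simp add: finite_transfer_amounts)
qed

lemma rank_le: "rank p n j \<le> n"
proof -
  have "{i \<in> {..<n}. p i \<le> p j} \<subseteq> {..<n}" by blast
  then show ?thesis unfolding rank_def by (metis card_lessThan card_mono finite_lessThan)
qed

lemma rank_pos: "j < n \<Longrightarrow> 0 < rank p n j"
  unfolding rank_def by (auto simp: card_gt_0_iff)

lemma rank_strict_mono:
  assumes "j < n" "p i < p j"
  shows "rank p n i < rank p n j"
proof -
  have "{k \<in> {..<n}. p k \<le> p i} \<subseteq> {k \<in> {..<n}. p k \<le> p j}"
    using assms by auto
  moreover have "j \<in> {k \<in> {..<n}. p k \<le> p j} - {k \<in> {..<n}. p k \<le> p i}"
    using assms by simp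
  ultimately have "{k \<in> {..<n}. p k \<le> p i} \<subset> {k \<in> {..<n}. p k \<le> p j}"
    by blast
  then show ?thesis unfolding rank_def by (intro psubset_card_mono) simp_all
qed

lemma sum_rank_le: "H \<subseteq> {..<n} \<Longrightarrow> sum (rank p n) H \<le> n\<^sup>2"
proof -
  assume H: "H \<subseteq> {..<n}"
  have "sum (rank p n) H \<le> of_nat (card H) * n"
    by (rule sum_bounded_above) (rule rank_le)
  also have "\<dots> \<le> n * n"
    using card_mono[OF _ H] by simp
  finally show ?thesis by (simp add: power2_eq_square)
qed

lemma heavy_rank_le: "X \<subseteq> {..<n} \<Longrightarrow> Y \<subseteq> {..<n} \<Longrightarrow> heavy_rank p n X Y \<le> n\<^sup>2"
  unfolding heavy_rank_def by (simp add: sum_rank_le)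

lemma potential_commute: "potential p n Y X = potential p n X Y"
  unfolding potential_def heavy_rank_def by (auto simp: abs_minus_commute)

lemma potential_le:
  assumes "X \<subseteq> {..<n}" "Y \<subseteq> {..<n}"
  shows "potential p n X Y \<le> 7 * n ^ 4"
proof -
  have "potential p n X Y \<le> (2 * n\<^sup>2 + n) * (n\<^sup>2 + 1) + n\<^sup>2"
    unfolding potential_def
    by (intro add_mono mult_le_mono1 amounts_below_le heavy_rank_le assms)
  also have "\<dots> = 2 * n ^ 4 + n ^ 3 + 3 * n\<^sup>2 + n"
    by (simp add: algebra_simps power_numeral_reduce)
  also have "\<dots> \<le> 7 * n ^ 4"
  proof (cases "n = 0")
    case False
    then have "n ^ 1 \<le> n ^ 4" "n ^ 2 \<le> n ^ 4" "n ^ 3 \<le> n ^ 4"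
      by (intro power_increasing; simp)+
    then show ?thesis unfolding power_one_right by linarith
  qed simp
  finally show ?thesis .
qed

lemma small_swap_cases:
  assumes "finite A" "finite B" "A \<noteq> {}" "card A + card B \<le> 2"
  obtains a where "A = {a}" "B = {}"
    | a b where "A = {a, b}" "a \<noteq> b" "B = {}"
    | a b where "A = {a}" "B = {b}"
proof -
  have "card A \<ge> 1" using assms(1,3) by (simp add: Suc_le_eq card_gt_0_iff)
  then consider "card A = 1" "card B = 0" | "card A = 2" "card B = 0" | "card A = 1" "card B = 1"
    using assms(4) by linarith
  then show ?thesis
    using that assms(2) by cases (auto simp: card_1_singleton_iff card_2_iff)
qed

lemma improving_transfer:
  assumes "A \<subseteq> {..<n}" "B \<subseteq> {..<n}" "card A + card B \<le> 2"
    and nonneg: "\<forall>j<n. 0 \<le> p j" and less: "sum p B < sum p A"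
  shows "sum p A - sum p B \<in> transfer_amounts p n \<and> sum (rank p n) B < sum (rank p n) A"
proof -
  have "finite A" "finite B" using assms(1,2) finite_subset by blast+
  moreover have "0 \<le> sum p B"
    using assms(2) nonneg by (intro sum_nonneg) auto
  then have "A \<noteq> {}" using less by auto
  ultimately consider a where "A = {a}" "B = {}"
    | a b where "A = {a, b}" "a \<noteq> b" "B = {}"
    | a b where "A = {a}" "B = {b}"
    using small_swap_cases assms(3) by metis
  then show ?thesis
  proof cases
    case (1 a)
    then show ?thesis
      using assms(1) by (auto simp: transfer_amounts_def rank_pos)
  next
    case (2 a b)
    then show ?thesis
      using assms(1) by (auto simp: transfer_amounts_def rank_pos add_pos_pos)
  next
    case (3 a b)
    then show ?thesis
      using assms(1,2) less by (auto simp: transfer_amounts_def intro: rank_strict_mono)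
  qed
qed

lemma sum_swap:
  fixes f :: "'a \<Rightarrow> 'b::comm_monoid_add"
  assumes "finite X" "finite B" "A \<subseteq> X" "B \<inter> X = {}"
  shows "sum f ((X - A) \<union> B) + sum f A = sum f X + sum f B"
proof -
  have "sum f ((X - A) \<union> B) = sum f (X - A) + sum f B"
    using assms by (intro sum.union_disjoint) auto
  then have "sum f ((X - A) \<union> B) + sum f A = (sum f (X - A) + sum f A) + sum f B"
    by (simp add: ac_simps)
  also have "sum f (X - A) + sum f A = sum f X"
    using assms by (metis sum.subset_diff add.commute)
  finally show ?thesis .
qed

lemma lex_weighted_less:
  fixes a a' r r' N :: nat
  assumes "a' < a \<and> r' \<le> N \<or> a' \<le> a \<and> r' < r"
  shows "a' * (N + 1) + r' < a * (N + 1) + r"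
  using assms
proof
  assume "a' < a \<and> r' \<le> N"
  then have "Suc a' * (N + 1) \<le> a * (N + 1)" by (intro mult_le_mono1) simp
  then show ?thesis using \<open>a' < a \<and> r' \<le> N\<close> by simp
next
  assume "a' \<le> a \<and> r' < r"
  then have "a' * (N + 1) \<le> a * (N + 1)" by (intro mult_le_mono1) simp
  then show ?thesis using \<open>a' \<le> a \<and> r' < r\<close> by simp
qed

lemma potential_swap_less:
  fixes p :: "nat \<Rightarrow> real"
  assumes XY: "X \<union> Y = {..<n}" "X \<inter> Y = {}"
    and AB: "A \<subseteq> X" "B \<subseteq> Y" "card A + card B \<le> 2"
    and nonneg: "\<forall>j<n. 0 \<le> p j"
    and improving: "max (sum p ((X - A) \<union> B)) (sum p ((Y - B) \<union> A)) < sum p X"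
  shows "potential p n ((X - A) \<union> B) ((Y - B) \<union> A) < potential p n X Y"
proof -
  define X' Y' where "X' = (X - A) \<union> B" and "Y' = (Y - B) \<union> A"
  define t D where "t = sum p A - sum p B" and "D = sum p X - sum p Y"
  have fin: "finite X" "finite Y" "finite A" "finite B"
    using XY AB by (metis finite_Un finite_lessThan finite_subset)+
  have disj: "B \<inter> X = {}" "A \<inter> Y = {}"
    using AB XY by auto
  have "sum p X' = sum p X - t" "sum p Y' = sum p Y + t"
    using sum_swap[OF fin(1,4) AB(1) disj(1), of p] sum_swap[OF fin(2,3) AB(2) disj(2), of p]
    unfolding X'_def Y'_def t_def by simp_all
  moreover have "sum p X' < sum p X" "sum p Y' < sum p X"
    using improving unfolding X'_def Y'_def by simp_all
  ultimately have t: "0 < t" "t < D" and diff': "sum p X' - sum p Y' = D - 2 * t"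
    unfolding D_def by linarith+
  have "A \<subseteq> {..<n}" "B \<subseteq> {..<n}" using XY AB by blast+
  then have t_amount: "t \<in> transfer_amounts p n"
    and rank_AB: "sum (rank p n) B < sum (rank p n) A"
    using improving_transfer[of A n B p] AB(3) nonneg t(1) unfolding t_def by simp_all
  have heavy_X: "heavy_rank p n X Y = sum (rank p n) X"
    using t unfolding heavy_rank_def D_def by simp
  have diff: "\<bar>sum p X - sum p Y\<bar> = D"
    using t unfolding D_def by simp
  have "X' \<subseteq> {..<n}" "Y' \<subseteq> {..<n}"
    using XY AB unfolding X'_def Y'_def by blast+
  then have rank'_le: "heavy_rank p n X' Y' \<le> n\<^sup>2" by (rule heavy_rank_le)
  have "potential p n X' Y' < potential p n X Y"
  proof (cases "D - 2 * t > 0")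
    case True
    then have "heavy_rank p n X' Y' = sum (rank p n) X'"
      using diff' unfolding heavy_rank_def by simp
    moreover have "sum (rank p n) X' + sum (rank p n) A = sum (rank p n) X + sum (rank p n) B"
      using sum_swap[OF fin(1,4) AB(1) disj(1)] unfolding X'_def .
    ultimately have "heavy_rank p n X' Y' < heavy_rank p n X Y"
      using rank_AB heavy_X by linarith
    moreover have "amounts_below p n \<bar>sum p X' - sum p Y'\<bar> \<le> amounts_below p n D"
      using True t diff' by (intro amounts_below_mono) simp
    ultimately show ?thesis
      unfolding potential_def diff by (intro lex_weighted_less) simp
  next
    case False
    \<comment> \<open>the heavier machine changed, so the new difference 2t - D lies below t\<close>
    then have "\<bar>sum p X' - sum p Y'\<bar> < t"
      using t diff' by linarith
    then have "amounts_below p n \<bar>sum p X' - sum p Y'\<bar> < amounts_below p n D"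
      using t t_amount by (intro amounts_below_strict_mono[of t])
    then show ?thesis
      unfolding potential_def diff using rank'_le by (intro lex_weighted_less) simp
  qed
  then show ?thesis unfolding X'_def Y'_def .
qed

lemma swap2_neighbor_subset: "M \<subseteq> {..<n} \<Longrightarrow> swap2_neighbor n M M' \<Longrightarrow> M' \<subseteq> {..<n}"
  unfolding swap2_neighbor_def machine2_def by blast

lemma improving_swap2_potential_less:
  assumes M: "M \<subseteq> {..<n}" and nonneg: "\<forall>j<n. 0 \<le> p j"
    and step: "improving_swap2 p n M M'"
  shows "potential p n M' (machine2 n M') < potential p n M (machine2 n M)"
proof -
  obtain A B where AB: "A \<subseteq> M" "B \<subseteq> machine2 n M" "card A + card B \<le> 2"
    and M': "M' = (M - A) \<union> B"
    using step unfolding improving_swap2_def swap2_neighbor_def by blast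
  have M2': "machine2 n M' = (machine2 n M - B) \<union> A"
    using M M' AB unfolding machine2_def by auto
  have split: "M \<union> machine2 n M = {..<n}" "M \<inter> machine2 n M = {}"
    using M unfolding machine2_def by auto
  have improving: "max (sum p ((M - A) \<union> B)) (sum p ((machine2 n M - B) \<union> A))
      < max (sum p M) (sum p (machine2 n M))"
    using step unfolding improving_swap2_def makespan_def M2' unfolding M' by simp
  have "potential p n ((M - A) \<union> B) ((machine2 n M - B) \<union> A) < potential p n M (machine2 n M)"
  proof (cases "sum p (machine2 n M) \<le> sum p M")
    case True
    with improving show ?thesis
      by (intro potential_swap_less[OF split AB nonneg]) simp
  next
    case False
    have "machine2 n M \<union> M = {..<n}" "machine2 n M \<inter> M = {}"
      using split by auto
    moreover have "card B + card A \<le> 2" using AB(3) by simp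
    ultimately have "potential p n ((machine2 n M - B) \<union> A) ((M - A) \<union> B)
        < potential p n (machine2 n M) M"
      using potential_swap_less[of "machine2 n M" M n B A p] AB(1,2) nonneg False improving
      by (simp add: max.commute)
    then show ?thesis by (simp add: potential_commute)
  qed
  then show ?thesis unfolding M2' unfolding M' .
qed

lemma descending_chain_length:
  fixes f :: "nat \<Rightarrow> nat"
  assumes "\<And>i. i < k \<Longrightarrow> f (Suc i) < f i"
  shows "k \<le> f 0"
proof -
  have "f i + i \<le> f 0" if "i \<le> k" for i
    using that
  proof (induction i)
    case (Suc i)
    then show ?case using assms[of i] by simp
  qed simp
  from this[of k] show ?thesis by simp
qed

theorem theorem4:
  "\<exists>C::nat. \<forall>(n::nat) (p::nat \<Rightarrow> real) (\<sigma>::nat \<Rightarrow> nat set) (k::nat).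
     (\<forall>j<n. p j > 0) \<longrightarrow> \<sigma> 0 \<subseteq> {..<n} \<longrightarrow>
     (\<forall>i<k. improving_swap2 p n (\<sigma> i) (\<sigma> (Suc i))) \<longrightarrow>
     k \<le> C * n ^ 4"
proof (intro exI[of _ 7] allI impI)
  fix n :: nat and p :: "nat \<Rightarrow> real" and \<sigma> :: "nat \<Rightarrow> nat set" and k :: nat
  assume pos: "\<forall>j<n. p j > 0" and start: "\<sigma> 0 \<subseteq> {..<n}"
    and steps: "\<forall>i<k. improving_swap2 p n (\<sigma> i) (\<sigma> (Suc i))"
  have nonneg: "\<forall>j<n. 0 \<le> p j" using pos by (simp add: less_imp_le)
  have schedule: "\<sigma> i \<subseteq> {..<n}" if "i \<le> k" for i
    using that
  proof (induction i)
    case (Suc i)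
    then show ?case
      using steps swap2_neighbor_subset unfolding improving_swap2_def by simp
  qed (use start in simp)
  let ?\<Phi> = "\<lambda>i. potential p n (\<sigma> i) (machine2 n (\<sigma> i))"
  have "k \<le> ?\<Phi> 0"
    using improving_swap2_potential_less schedule steps nonneg
    by (intro descending_chain_length) simp
  also have "?\<Phi> 0 \<le> 7 * n ^ 4"
    using start by (intro potential_le) (auto simp: machine2_def)
  finally show "k \<le> 7 * n ^ 4" .
qed

end
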